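(* Let $(R,\mathfrak{m})$ be a commutative Artinian local ring with identity, $\mathfrak{m}\neq0$ and $\mathfrak{m}^2=0$. If $f\in R[x]$ is a GE polynomial of degree at least $2$, then $f$ is irreducible if and only if its constant term is nonzero.
   Context: A generalized Eisenstein (GE) polynomial is a nonconstant monic polynomial $x^d+f_{d-1}x^{d-1}+\dots+f_0\in R[x]$ with $f_i\in\mathfrak{m}$ for all $i<d$. A nonunit polynomial $f$ is irreducible if $f=gh$ implies $g$ or $h$ is a unit of $R[x]$. *)

theory Defs
  imports "HOL-Computational_Algebra.Polynomial" "HOL-Computational_Algebra.Factorial_Ring"
begin

definition is_ideal :: "'a::comm_ring_1 set \<Rightarrow> bool" where
  "is_ideal I \<longleftrightarrow> 0 \<in> I \<and> (\<forall>a\<in>I. \<forall>b\<in>I. a + b \<in> I) \<and> (\<forall>r. \<forall>a\<in>I. r * a \<in> I)"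

definition maximal_ideal :: "'a::comm_ring_1 set \<Rightarrow> bool" where
  "maximal_ideal M \<longleftrightarrow> is_ideal M \<and> M \<noteq> UNIV \<and>
     (\<forall>J. is_ideal J \<and> M \<subseteq> J \<longrightarrow> J = M \<or> J = UNIV)"

definition local_ring_with :: "'a::comm_ring_1 set \<Rightarrow> bool" where
  "local_ring_with M \<longleftrightarrow> maximal_ideal M \<and> (\<forall>N. maximal_ideal N \<longrightarrow> N = M)"

definition artinian :: "'a::comm_ring_1 itself \<Rightarrow> bool" where
  "artinian _ \<longleftrightarrow> (\<forall>I :: nat \<Rightarrow> 'a set. (\<forall>n. is_ideal (I n) \<and> I (Suc n) \<subseteq> I n)
      \<longrightarrow> (\<exists>N. \<forall>n\<ge>N. I n = I N))"

definition GE_poly :: "'a::comm_ring_1 set \<Rightarrow> 'a poly \<Rightarrow> bool" where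
  "GE_poly M f \<longleftrightarrow> degree f \<ge> 1 \<and> lead_coeff f = 1 \<and> (\<forall>i < degree f. coeff f i \<in> M)"

end

theory Submission
  imports Defs
begin

text \<open>
  The maximal ideal \<open>M\<close> is prime, so comparing the lowest and the highest coefficients outside
  \<open>M\<close> shows: if \<open>f = g h\<close> and the leading coefficient is the only coefficient of \<open>f\<close> outside
  \<open>M\<close>, then \<open>g\<close> and \<open>h\<close> each have exactly one coefficient outside \<open>M\<close>, in degrees \<open>r\<close>
  and \<open>s\<close> with \<open>r + s = deg f\<close>. If \<open>r, s > 0\<close>, the constant term of \<open>f\<close> lies in \<open>M\<^sup>2 = 0\<close>;
  otherwise, say \<open>r = 0\<close>, \<open>g\<close> is a unit plus a polynomial \<open>n\<close> with \<open>n\<^sup>2 = 0\<close>, hence a unit.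
  Conversely, if \<open>f(0) = 0\<close> then \<open>f = x \<cdot> (f div x)\<close> is a factorisation into two monic
  non-units.
\<close>

definition prime_ideal :: "'a::comm_ring_1 set \<Rightarrow> bool" where
  "prime_ideal P \<longleftrightarrow> is_ideal P \<and> P \<noteq> UNIV \<and> (\<forall>a b. a * b \<in> P \<longrightarrow> a \<in> P \<or> b \<in> P)"

lemma is_ideal_zero: "is_ideal I \<Longrightarrow> 0 \<in> I"
  by (simp add: is_ideal_def)

lemma is_ideal_add: "is_ideal I \<Longrightarrow> a \<in> I \<Longrightarrow> b \<in> I \<Longrightarrow> a + b \<in> I"
  by (simp add: is_ideal_def)

lemma is_ideal_mult_left: "is_ideal I \<Longrightarrow> a \<in> I \<Longrightarrow> r * a \<in> I"
  by (simp add: is_ideal_def)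

lemma is_ideal_mult_right: "is_ideal I \<Longrightarrow> a \<in> I \<Longrightarrow> a * r \<in> I"
  by (metis is_ideal_mult_left mult.commute)

lemma is_ideal_diff: "is_ideal I \<Longrightarrow> a \<in> I \<Longrightarrow> b \<in> I \<Longrightarrow> a - b \<in> I"
  by (metis is_ideal_add is_ideal_mult_left diff_conv_add_uminus mult_minus1)

lemma is_ideal_sum: "is_ideal I \<Longrightarrow> (\<And>i. i \<in> S \<Longrightarrow> F i \<in> I) \<Longrightarrow> sum F S \<in> I"
  by (induction S rule: infinite_finite_induct) (auto simp: is_ideal_zero is_ideal_add)

lemma is_ideal_one_notin: "is_ideal I \<Longrightarrow> I \<noteq> UNIV \<Longrightarrow> 1 \<notin> I"
  by (metis UNIV_eq_I is_ideal_mult_left mult.right_neutral)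

lemma maximal_ideal_one_eq:
  assumes max: "maximal_ideal M" and a: "a \<notin> M"
  obtains m r where "m \<in> M" "m + r * a = 1"
proof -
  have I: "is_ideal M" using max by (simp add: maximal_ideal_def)
  define J where "J = {m + r * a | m r. m \<in> M}"
  have "is_ideal J"
    unfolding is_ideal_def J_def
  proof (intro conjI ballI allI)
    show "0 \<in> {m + r * a |m r. m \<in> M}"
      using is_ideal_zero[OF I] by (intro CollectI exI[of _ 0]) simp
  next
    fix x y assume "x \<in> {m + r * a |m r. m \<in> M}" "y \<in> {m + r * a |m r. m \<in> M}"
    then obtain m1 r1 m2 r2 where "x = m1 + r1 * a" "y = m2 + r2 * a" "m1 \<in> M" "m2 \<in> M"
      by blast
    then have "x + y = (m1 + m2) + (r1 + r2) * a" "m1 + m2 \<in> M"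
      by (simp_all add: algebra_simps is_ideal_add[OF I])
    then show "x + y \<in> {m + r * a |m r. m \<in> M}" by blast
  next
    fix s x assume "x \<in> {m + r * a |m r. m \<in> M}"
    then obtain m1 r1 where "x = m1 + r1 * a" "m1 \<in> M" by blast
    then have "s * x = s * m1 + (s * r1) * a" "s * m1 \<in> M"
      by (simp_all add: algebra_simps is_ideal_mult_left[OF I] is_ideal_mult_right[OF I])
    then show "s * x \<in> {m + r * a |m r. m \<in> M}" by blast
  qed
  moreover have "M \<subseteq> J"
  proof
    fix x assume "x \<in> M"
    then show "x \<in> J" unfolding J_def by (intro CollectI exI[of _ x] exI[of _ 0]) simp
  qed
  moreover have "a \<in> J"
    unfolding J_def using is_ideal_zero[OF I] by (intro CollectI exI[of _ 0] exI[of _ 1]) simp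
  ultimately have "J = UNIV" using max a unfolding maximal_ideal_def by blast
  then obtain m r where "1 = m + r * a" "m \<in> M" unfolding J_def by blast
  then show thesis using that by simp
qed

lemma maximal_ideal_imp_prime_ideal:
  assumes max: "maximal_ideal M"
  shows "prime_ideal M"
proof -
  have I: "is_ideal M" and proper: "M \<noteq> UNIV" using max by (auto simp: maximal_ideal_def)
  have "a * b \<notin> M" if a: "a \<notin> M" and b: "b \<notin> M" for a b
  proof
    assume ab: "a * b \<in> M"
    obtain m r where m: "m \<in> M" and "m + r * a = 1" using maximal_ideal_one_eq[OF max a] .
    obtain m' r' where m': "m' \<in> M" and "m' + r' * b = 1" using maximal_ideal_one_eq[OF max b] .
    then have "1 = (m + r * a) * (m' + r' * b)" using \<open>m + r * a = 1\<close> by simp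
    also have "\<dots> = m * (m' + r' * b) + (r * a * m' + (r * r') * (a * b))"
      by (simp add: algebra_simps)
    also have "\<dots> \<in> M"
      using m m' ab
      by (intro is_ideal_add[OF I]) (simp_all add: is_ideal_mult_left[OF I] is_ideal_mult_right[OF I])
    finally show False using is_ideal_one_notin[OF I proper] by simp
  qed
  then show ?thesis using I proper by (auto simp: prime_ideal_def)
qed

lemma square_zero_maximal_ideal_compl_unit:
  assumes max: "maximal_ideal M" and sq: "\<forall>a\<in>M. \<forall>b\<in>M. a * b = 0" and a: "a \<notin> M"
  shows "a dvd 1"
proof -
  obtain m r where m: "m \<in> M" and "m + r * a = 1" using maximal_ideal_one_eq[OF max a] .
  then have "r * a = 1 - m" by (simp add: eq_diff_eq add.commute)
  then have "a * (r * (1 + m)) = (1 - m) * (1 + m)" by (metis mult.assoc mult.commute)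
  also have "\<dots> = 1" using sq m by (simp add: algebra_simps)
  finally show ?thesis by (metis dvdI)
qed

lemma monic_not_unit:
  fixes p :: "'a::comm_ring_1 poly"
  assumes "(1::'a) \<noteq> 0" "lead_coeff p = 1" "degree p \<ge> 1"
  shows "\<not> p dvd 1"
proof
  assume "p dvd 1"
  then obtain q where q: "1 = p * q" by (auto simp: dvd_def)
  have "q \<noteq> 0" using q assms(1) by auto
  then have "coeff (p * q) (degree p + degree q) \<noteq> 0"
    using assms by (simp add: coeff_mult_degree_sum)
  then have "degree p + degree q \<le> degree (p * q)" by (rule le_degree)
  then show False using q[symmetric] assms(3) by simp
qed

lemma monic_coeff_0_eq_0_not_irreducible:
  fixes f :: "'a::comm_ring_1 poly"
  assumes "(1::'a) \<noteq> 0" "lead_coeff f = 1" "degree f \<ge> 2" "coeff f 0 = 0"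
  shows "\<not> irreducible f"
proof
  assume irr: "irreducible f"
  obtain g where fg: "f = pCons 0 g" using assms(4) by (cases f) simp
  have "g \<noteq> 0" using fg assms(3) by auto
  then have "degree g \<ge> 1" "lead_coeff g = 1" using fg assms(2,3) by auto
  then have "\<not> g dvd 1" using monic_not_unit[OF assms(1)] by blast
  moreover have "\<not> [:0, 1:] dvd (1::'a poly)" using monic_not_unit[OF assms(1), of "[:0, 1:]"] assms(1) by simp
  moreover have "f = [:0, 1:] * g" using fg by simp
  ultimately show False using irreducibleD[OF irr] by blast
qed

text \<open>With \<open>p = [:c\<^sub>0:] + n\<close> and \<open>n\<^sup>2 = 0\<close>, the inverse is \<open>c\<^sub>0\<^sup>-\<^sup>1 (1 - c\<^sub>0\<^sup>-\<^sup>1 n)\<close>.\<close>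
lemma square_zero_ideal_poly_unit:
  fixes p :: "'a::comm_ring_1 poly"
  assumes I: "is_ideal M" and sq: "\<forall>a\<in>M. \<forall>b\<in>M. a * b = 0"
    and unit: "coeff p 0 dvd 1" and hi: "\<forall>i>0. coeff p i \<in> M"
  shows "p dvd 1"
proof -
  obtain c where c: "1 = coeff p 0 * c" using unit by (rule dvdE)
  define n where "n = p - [:coeff p 0:]"
  define e where "e = smult c n"
  have "coeff n i \<in> M" for i
    using hi I unfolding n_def by (cases i) (auto simp: is_ideal_zero)
  then have "n * n = 0"
    using sq by (intro poly_eqI) (simp add: coeff_mult)
  then have "e * e = 0" by (simp add: e_def)
  have "p * [:c:] = smult c ([:coeff p 0:] + n)" by (simp add: n_def)
  also have "\<dots> = 1 + e" using c by (simp add: e_def smult_add_right one_pCons mult.commute)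
  finally have "p * ([:c:] * (1 - e)) = (1 + e) * (1 - e)" by (metis mult.assoc)
  also have "\<dots> = 1" using \<open>e * e = 0\<close> by (simp add: algebra_simps)
  finally show ?thesis by (metis dvdI)
qed

lemma coeff_mult_notin_prime_ideal:
  fixes g h :: "'a::comm_ring_1 poly"
  assumes P: "prime_ideal P" and "a \<le> n" "coeff g a \<notin> P" "coeff h (n - a) \<notin> P"
    and others: "\<And>i. i \<le> n \<Longrightarrow> i \<noteq> a \<Longrightarrow> coeff g i \<in> P \<or> coeff h (n - i) \<in> P"
  shows "coeff (g * h) n \<notin> P"
proof
  assume prod: "coeff (g * h) n \<in> P"
  have I: "is_ideal P" using P by (simp add: prime_ideal_def)
  have rest: "(\<Sum>i\<in>{..n} - {a}. coeff g i * coeff h (n - i)) \<in> P"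
    using others by (intro is_ideal_sum[OF I])
      (blast intro: is_ideal_mult_left[OF I] is_ideal_mult_right[OF I])
  have "coeff (g * h) n = coeff g a * coeff h (n - a) + (\<Sum>i\<in>{..n} - {a}. coeff g i * coeff h (n - i))"
    using \<open>a \<le> n\<close> by (simp add: coeff_mult sum.remove[of _ a])
  then have "coeff g a * coeff h (n - a) \<in> P"
    using is_ideal_diff[OF I prod rest] by simp
  then show False using P assms(3,4) by (auto simp: prime_ideal_def)
qed

lemma coeff_mult_lowest_notin_prime_ideal:
  fixes g h :: "'a::comm_ring_1 poly"
  assumes P: "prime_ideal P" and "coeff g r \<notin> P" "coeff h s \<notin> P"
    and "\<forall>i<r. coeff g i \<in> P" "\<forall>i<s. coeff h i \<in> P"
  shows "coeff (g * h) (r + s) \<notin> P"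
proof (rule coeff_mult_notin_prime_ideal[OF P, of r])
  fix i assume "i \<le> r + s" "i \<noteq> r"
  then have "i < r \<or> r + s - i < s" by linarith
  then show "coeff g i \<in> P \<or> coeff h (r + s - i) \<in> P" using assms(4,5) by blast
qed (use assms in auto)

lemma coeff_mult_highest_notin_prime_ideal:
  fixes g h :: "'a::comm_ring_1 poly"
  assumes P: "prime_ideal P" and "coeff g t \<notin> P" "coeff h u \<notin> P"
    and "\<forall>i>t. coeff g i \<in> P" "\<forall>i>u. coeff h i \<in> P"
  shows "coeff (g * h) (t + u) \<notin> P"
proof (rule coeff_mult_notin_prime_ideal[OF P, of t])
  fix i assume "i \<le> t + u" "i \<noteq> t"
  then have "i > t \<or> t + u - i > u" by linarith
  then show "coeff g i \<in> P \<or> coeff h (t + u - i) \<in> P" using assms(4,5) by blast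
qed (use assms in auto)

lemma finite_coeffs_notin_ideal: "is_ideal I \<Longrightarrow> finite {i. coeff p i \<notin> I}"
  by (rule finite_subset[of _ "{..degree p}"]) (auto, metis coeff_eq_0 is_ideal_zero not_le)

lemma mult_single_coeff_notin_prime_ideal:
  fixes g h :: "'a::comm_ring_1 poly"
  assumes P: "prime_ideal P" and gh: "{i. coeff (g * h) i \<notin> P} = {d}"
  obtains r s where "r + s = d" "{i. coeff g i \<notin> P} = {r}" "{i. coeff h i \<notin> P} = {s}"
proof -
  have I: "is_ideal P" using P by (simp add: prime_ideal_def)
  define G where "G = {i. coeff g i \<notin> P}"
  define H where "H = {i. coeff h i \<notin> P}"
  have fin: "finite G" "finite H"
    unfolding G_def H_def by (simp_all add: finite_coeffs_notin_ideal[OF I])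
  have "G \<noteq> {} \<and> H \<noteq> {}"
  proof (rule ccontr)
    assume "\<not> (G \<noteq> {} \<and> H \<noteq> {})"
    then have "coeff g i * coeff h (d - i) \<in> P" for i
      by (auto simp: G_def H_def is_ideal_mult_left[OF I] is_ideal_mult_right[OF I])
    then have "coeff (g * h) d \<in> P" by (simp add: coeff_mult is_ideal_sum[OF I])
    then show False using gh by blast
  qed
  then have ne: "G \<noteq> {}" "H \<noteq> {}" by blast+
  have low: "coeff (g * h) (Min G + Min H) \<notin> P"
  proof (rule coeff_mult_lowest_notin_prime_ideal[OF P])
    show "coeff g (Min G) \<notin> P" "coeff h (Min H) \<notin> P"
      using Min_in[OF fin(1) ne(1)] Min_in[OF fin(2) ne(2)] by (simp_all add: G_def H_def)
    show "\<forall>i<Min G. coeff g i \<in> P" "\<forall>i<Min H. coeff h i \<in> P"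
      using Min_le[OF fin(1)] Min_le[OF fin(2)] by (auto simp: G_def H_def not_le[symmetric])
  qed
  have high: "coeff (g * h) (Max G + Max H) \<notin> P"
  proof (rule coeff_mult_highest_notin_prime_ideal[OF P])
    show "coeff g (Max G) \<notin> P" "coeff h (Max H) \<notin> P"
      using Max_in[OF fin(1) ne(1)] Max_in[OF fin(2) ne(2)] by (simp_all add: G_def H_def)
    show "\<forall>i>Max G. coeff g i \<in> P" "\<forall>i>Max H. coeff h i \<in> P"
      using Max_ge[OF fin(1)] Max_ge[OF fin(2)] by (auto simp: G_def H_def not_le[symmetric])
  qed
  have "Min G + Min H = d" "Max G + Max H = d" using low high gh by blast+
  moreover have "Min G \<le> Max G" "Min H \<le> Max H" using fin ne by simp_all
  ultimately have "Min G = Max G" "Min H = Max H" by linarith+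
  then have "G = {Min G}" "H = {Min H}"
    using fin ne Min_le Max_ge by (metis antisym subset_singleton_iff subsetI singletonI)+
  with \<open>Min G + Min H = d\<close> show thesis using that unfolding G_def H_def by blast
qed

lemma GE_poly_irreducible:
  fixes f :: "'a::comm_ring_1 poly"
  assumes max: "maximal_ideal M" and sq: "\<forall>a\<in>M. \<forall>b\<in>M. a * b = 0"
    and GE: "GE_poly M f" and c0: "coeff f 0 \<noteq> 0"
  shows "irreducible f"
proof -
  have I: "is_ideal M" and proper: "M \<noteq> UNIV" using max by (auto simp: maximal_ideal_def)
  have P: "prime_ideal M" using max by (rule maximal_ideal_imp_prime_ideal)
  have one: "(1::'a) \<notin> M" using is_ideal_one_notin[OF I proper] .
  have f: "lead_coeff f = 1" "degree f \<ge> 1" "\<forall>i<degree f. coeff f i \<in> M"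
    using GE by (auto simp: GE_poly_def)
  have supp_f: "{i. coeff f i \<notin> M} = {degree f}"
    using f one is_ideal_zero[OF I] by (auto, metis coeff_eq_0 linorder_neqE_nat)
  have factor_unit: "g dvd 1" if "{i. coeff g i \<notin> M} = {0}" for g :: "'a poly"
    using that square_zero_maximal_ideal_compl_unit[OF max sq]
    by (intro square_zero_ideal_poly_unit[OF I sq]) (auto simp: set_eq_iff, metis neq0_conv)
  have "g dvd 1 \<or> h dvd 1" if fgh: "f = g * h" for g h
  proof -
    obtain r s where rs: "{i. coeff g i \<notin> M} = {r}" "{i. coeff h i \<notin> M} = {s}"
      using mult_single_coeff_notin_prime_ideal[OF P] supp_f fgh by metis
    have "r = 0 \<or> s = 0"
    proof (rule ccontr)
      assume "\<not> (r = 0 \<or> s = 0)"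
      then have "coeff g 0 \<in> M" "coeff h 0 \<in> M" using rs by (auto simp: set_eq_iff)
      then show False using sq c0 fgh by (simp add: coeff_mult)
    qed
    then show ?thesis using factor_unit rs by auto
  qed
  moreover have "f \<noteq> 0" "\<not> f dvd 1"
    using f monic_not_unit[of f] one is_ideal_zero[OF I] by auto
  ultimately show ?thesis by (auto simp: irreducible_def)
qed

theorem corollary3p5:
  fixes M :: "'a::comm_ring_1 set" and f :: "'a poly"
  assumes "artinian TYPE('a)"
    and "local_ring_with M"
    and "M \<noteq> {0}"
    and "\<forall>a\<in>M. \<forall>b\<in>M. a * b = 0"
    and "GE_poly M f"
    and "degree f \<ge> 2"
  shows "irreducible f \<longleftrightarrow> coeff f 0 \<noteq> 0"
proof -
  have max: "maximal_ideal M" using assms(2) by (simp add: local_ring_with_def)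
  then have "(1::'a) \<noteq> 0"
    using is_ideal_one_notin is_ideal_zero by (fastforce simp: maximal_ideal_def)
  then have "coeff f 0 = 0 \<Longrightarrow> \<not> irreducible f"
    using assms(5,6) monic_coeff_0_eq_0_not_irreducible by (auto simp: GE_poly_def)
  moreover have "coeff f 0 \<noteq> 0 \<Longrightarrow> irreducible f"
    using GE_poly_irreducible[OF max assms(4,5)] .
  ultimately show ?thesis by blast
qed

end
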